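(* Let $q$ be a prime power and let $U_1,U_2$ be subspaces of $\mathbf F_q^k$ of dimensions $u_1,u_2$ such that $U_0=U_1\cap U_2$ has dimension $u_0<\min\{u_1,u_2\}$. Let $t\ge0$ and $v_0,v_1,v_2$ be integers with $0\le v_0\le u_0$, $v_0\le v_1\le u_1$, $v_0\le v_2\le u_2$. (i) The number $N_t(u_0,u_1,u_2,v_0,v_1,v_2)$ of $(t+v_1+v_2-v_0)$-dimensional subspaces $V$ of $U_1+U_2$ with $\dim(V\cap U_0)=v_0$, $\dim(V\cap U_1)=v_1$, $\dim(V\cap U_2)=v_2$ equals $$\binom{u_0}{v_0}_q\,q^{(u_0-v_0)(t+v_1+v_2-2v_0)}\,N_t(u_1-u_0,u_2-u_0,v_1-v_0,v_2-v_0).$$ (ii) For $l\ge0$, the number $N^{k,u_0,u_1,u_2}_{l,v_0,v_1,v_2}$ of $l$-dimensional subspaces $V$ of $\mathbf F_q^k$ with $\dim(V\cap U_0)=v_0$, $\dim(V\cap U_1)=v_1$, $\dim(V\cap U_2)=v_2$ equals $$\sum_{t=0}^{t'}q^{((u_1-v_1)+(u_2-v_2)-(u_0-v_0)-t)(l-t-v_1-v_2+v_0)}\binom{k-u_1-u_2+u_0}{\,l-t-v_1-v_2+v_0\,}_q N_t(u_0,u_1,u_2,v_0,v_1,v_2),$$ where $t'=\min\{u_1-v_1,u_2-v_2\}$.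
   Context: $\binom{a}{b}_q=\prod_{i=0}^{b-1}\frac{q^a-q^i}{q^b-q^i}$ is the Gaussian binomial coefficient (the number of $b$-dimensional subspaces of $\mathbf F_q^a$), taken to be $0$ if $b<0$ or $b>a$. For integers $t,a,b,c,e\ge0$, $N_t(a,b,c,e)$ denotes the number of $(t+c+e)$-dimensional subspaces $V$ of $A\oplus B$ with $\dim(V\cap A)=c$ and $\dim(V\cap B)=e$, where $A,B$ are subspaces of some $\mathbf F_q$-vector space with $\dim A=a$, $\dim B=b$, $A\cap B=\{0\}$ (this number depends only on $q,t,a,b,c,e$). *)

theory Defs
  imports Complex_Main "HOL-Library.Cardinality" "HOL-Library.Function_Algebras"
begin

text \<open>Vectors of F_q^k are modelled as functions nat => 'a vanishing from index k on,
  where 'a is a finite field with q = CARD('a) elements.\<close>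

definition sc :: "'a::field \<Rightarrow> (nat \<Rightarrow> 'a) \<Rightarrow> (nat \<Rightarrow> 'a)" where
  "sc c v = (\<lambda>i. c * v i)"

interpretation fvs: vector_space "sc :: 'a::field \<Rightarrow> (nat \<Rightarrow> 'a) \<Rightarrow> (nat \<Rightarrow> 'a)"
  by unfold_locales (auto simp: sc_def fun_eq_iff algebra_simps)

abbreviation fsubspace :: "(nat \<Rightarrow> 'a::field) set \<Rightarrow> bool" where
  "fsubspace V \<equiv> module.subspace sc V"

abbreviation fdim :: "(nat \<Rightarrow> 'a::field) set \<Rightarrow> nat" where
  "fdim V \<equiv> vector_space.dim sc V"

definition Fk :: "nat \<Rightarrow> (nat \<Rightarrow> 'a::field) set" where
  "Fk k = {v. \<forall>i\<ge>k. v i = 0}"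

definition ssum :: "(nat \<Rightarrow> 'a::field) set \<Rightarrow> (nat \<Rightarrow> 'a) set \<Rightarrow> (nat \<Rightarrow> 'a) set" where
  "ssum A B = {x + y | x y. x \<in> A \<and> y \<in> B}"

definition gbinom :: "real \<Rightarrow> int \<Rightarrow> int \<Rightarrow> real" where
  "gbinom q a b = (if b < 0 \<or> b > a then 0
     else (\<Prod>i<nat b. (q ^ nat a - q ^ i) / (q ^ nat b - q ^ i)))"

text \<open>N_t(a,b,c,e) computed with the concrete choice A = F^a (first a coordinates),
  B = the span of coordinates a..a+b-1, so A + B = F^(a+b) and A \<inter> B = 0.\<close>
definition Nt :: "'a::{field,finite} itself \<Rightarrow> nat \<Rightarrow> nat \<Rightarrow> nat \<Rightarrow> nat \<Rightarrow> nat \<Rightarrow> nat" where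
  "Nt _ t a b c e =
     (let A = (Fk a :: (nat \<Rightarrow> 'a) set); B = {v \<in> Fk (a + b). \<forall>i<a. v i = 0} in
      card {V. fsubspace V \<and> V \<subseteq> ssum A B \<and> fdim V = t + c + e
              \<and> fdim (V \<inter> A) = c \<and> fdim (V \<inter> B) = e})"

end

theory Submission
  imports Defs "HOL-Library.FuncSet"
begin

text \<open>
  Over a field with q elements a finite subspace S has exactly q^(dim S) elements, so Grassmann's
  formula, monotonicity of the dimension and the equality of nested subspaces of equal dimension
  all follow by counting. Counting in two ways the lists of m vectors of Y that are linearly
  independent modulo Z shows that Y has q^(z m) [y-z, m]_q subspaces of dimension m meeting Z
  trivially. If X \<subseteq> W \<subseteq> E and C is a complement of X in E, then V \<mapsto> V \<inter> C identifies the
  m-dimensional V \<subseteq> E with V \<inter> W = X with the (m-x)-dimensional subspaces of C meeting W \<inter> C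
  trivially, so there are q^((w-x)(m-x)) [e-w, m-x]_q of them.

  For (i), let C1, C2 be complements of U0 in U1, U2 and D = C1 + C2, so that U1 + U2 = U0 \<oplus> D.
  The map V \<mapsto> (V + U0) \<inter> D sends the subspaces to be counted to the subspaces Y of C1 \<oplus> C2
  counted by N_t (a linear isomorphism shows that this count only depends on dim C1 and dim C2),
  and its fibre over Y consists of the subspaces V of U0 \<oplus> Y of dimension v0 + dim Y with
  dim (V \<inter> U0) = v0, of which there are [u0, v0]_q q^((u0-v0) dim Y). For (ii), the subspaces V
  of F^k are sorted by X = V \<inter> (U1 + U2), and the number of V over a given X is the count above
  with W = U1 + U2.
\<close>

type_synonym 'a vec = "nat \<Rightarrow> 'a"

section \<open>Finite subspaces over a finite field\<close>

lemma card_field_ge_two: "2 \<le> CARD('a::{field,finite})"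
proof -
  have "card {0::'a, 1} \<le> CARD('a)" by (rule card_mono) auto
  then show ?thesis by simp
qed

lemma fspan_eq_image_lincomb:
  fixes S :: "'a::field vec set"
  assumes "finite S"
  shows "fvs.span S = (\<lambda>u. \<Sum>v\<in>S. sc (u v) v) ` (S \<rightarrow>\<^sub>E UNIV)"
proof
  show "fvs.span S \<subseteq> (\<lambda>u. \<Sum>v\<in>S. sc (u v) v) ` (S \<rightarrow>\<^sub>E UNIV)"
  proof
    fix x assume "x \<in> fvs.span S"
    then obtain u where "x = (\<Sum>v\<in>S. sc (u v) v)" using fvs.span_finite[OF assms] by auto
    also have "\<dots> = (\<Sum>v\<in>S. sc (restrict u S v) v)" by (rule sum.cong) auto
    finally show "x \<in> (\<lambda>u. \<Sum>v\<in>S. sc (u v) v) ` (S \<rightarrow>\<^sub>E UNIV)"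
      by (intro image_eqI[where x = "restrict u S"]) auto
  qed
  show "(\<lambda>u. \<Sum>v\<in>S. sc (u v) v) ` (S \<rightarrow>\<^sub>E UNIV) \<subseteq> fvs.span S"
    using fvs.span_finite[OF assms] by auto
qed

lemma finite_fspan:
  fixes S :: "'a::{field,finite} vec set"
  shows "finite S \<Longrightarrow> finite (fvs.span S)"
  by (simp add: fspan_eq_image_lincomb finite_PiE)

lemma card_fspan_independent:
  fixes B :: "'a::{field,finite} vec set"
  assumes fin: "finite B" and ind: "fvs.independent B"
  shows "card (fvs.span B) = CARD('a) ^ card B"
proof -
  let ?f = "\<lambda>u. \<Sum>v\<in>B. sc (u v) v"
  have "inj_on ?f (B \<rightarrow>\<^sub>E UNIV)"
  proof (rule inj_onI)
    fix u w assume u: "u \<in> B \<rightarrow>\<^sub>E UNIV" and w: "w \<in> B \<rightarrow>\<^sub>E UNIV" and eq: "?f u = ?f w"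
    have "(\<Sum>v\<in>B. sc (u v - w v) v) = ?f u - ?f w"
      by (simp add: fvs.scale_left_diff_distrib sum_subtractf)
    with eq have "\<forall>v\<in>B. u v - w v = 0"
      using fvs.independentD[OF ind fin order_refl, of "\<lambda>v. u v - w v"] by simp
    then show "u = w" using u w by (auto simp: PiE_def extensional_def fun_eq_iff)
  qed
  then have "card (fvs.span B) = card (B \<rightarrow>\<^sub>E (UNIV::'a set))"
    by (simp add: fspan_eq_image_lincomb[OF fin] card_image)
  then show ?thesis using fin by (simp add: card_PiE)
qed

lemma card_fsubspace:
  fixes S :: "'a::{field,finite} vec set"
  assumes "fsubspace S" "finite S"
  shows "card S = CARD('a) ^ fdim S"
proof -
  obtain B where B: "B \<subseteq> S" "fvs.independent B" "S \<subseteq> fvs.span B" "card B = fdim S"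
    using fvs.basis_exists by blast
  have "fvs.span B = S" using B assms(1) fvs.span_subspace by blast
  moreover have "finite B" using B(1) assms(2) finite_subset by blast
  ultimately show ?thesis using card_fspan_independent[of B] B(2,4) by simp
qed

lemma fdim_eq_if_card_eq:
  fixes S T :: "'a::{field,finite} vec set"
  assumes "fsubspace S" "finite S" "fsubspace T" "finite T" "card S = card T"
  shows "fdim S = fdim T"
proof -
  have "1 < CARD('a)" using card_field_ge_two[where 'a='a] by simp
  then show ?thesis
    using assms(5) card_fsubspace[OF assms(1,2)] card_fsubspace[OF assms(3,4)] by simp
qed

lemma fsubspace_ssum: "fsubspace S \<Longrightarrow> fsubspace T \<Longrightarrow> fsubspace (ssum S T)"
  unfolding ssum_def by (rule fvs.subspace_sums)

lemma ssum_eq_image: "ssum S T = (\<lambda>(x, y). x + y) ` (S \<times> T)"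
  unfolding ssum_def by auto

lemma finite_ssum: "finite S \<Longrightarrow> finite T \<Longrightarrow> finite (ssum S T)"
  unfolding ssum_eq_image by simp

lemma ssumI: "x \<in> S \<Longrightarrow> y \<in> T \<Longrightarrow> x + y \<in> ssum S T"
  unfolding ssum_def by blast

lemma ssumE:
  assumes "z \<in> ssum S T"
  obtains x y where "x \<in> S" "y \<in> T" "z = x + y"
  using assms unfolding ssum_def by blast

lemma ssum_commute: "ssum S T = ssum T S"
  unfolding ssum_def by (auto simp: add.commute) (metis add.commute)+

lemma ssum_upper1: "fsubspace T \<Longrightarrow> S \<subseteq> ssum S T"
  using ssumI[of _ S 0 T] fvs.subspace_0 by fastforce

lemma ssum_upper2: "fsubspace S \<Longrightarrow> T \<subseteq> ssum S T"
  using ssum_upper1 ssum_commute by metis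

lemma ssum_least: "fsubspace U \<Longrightarrow> S \<subseteq> U \<Longrightarrow> T \<subseteq> U \<Longrightarrow> ssum S T \<subseteq> U"
  unfolding ssum_def using fvs.subspace_add by blast

lemma ssum_mono: "S \<subseteq> S' \<Longrightarrow> T \<subseteq> T' \<Longrightarrow> ssum S T \<subseteq> ssum S' T'"
  unfolding ssum_def by blast

lemma ssum_zero_right: "fsubspace S \<Longrightarrow> ssum S {0} = S"
  unfolding ssum_def using fvs.subspace_0 by auto

lemma fspan_Un: "fvs.span (S \<union> T) = ssum (fvs.span S) (fvs.span T)"
  unfolding ssum_def by (rule fvs.span_Un)

text \<open>Unlike \<open>fvs.span_eq_iff\<close>, this rewrites the term \<open>fvs.span S\<close> itself.\<close>

lemma fspan_fsubspace [simp]: "fsubspace S \<Longrightarrow> fvs.span S = S"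
  by simp

lemma ssum_Int_modular:
  assumes "fsubspace C" "A \<subseteq> C"
  shows "ssum A B \<inter> C = ssum A (B \<inter> C)"
proof
  show "ssum A B \<inter> C \<subseteq> ssum A (B \<inter> C)"
  proof
    fix z assume z: "z \<in> ssum A B \<inter> C"
    then obtain x y where xy: "x \<in> A" "y \<in> B" "z = x + y" by (auto elim: ssumE)
    have "z - x \<in> C" using fvs.subspace_diff[OF assms(1)] z xy(1) assms(2) by blast
    then have "y \<in> C" using xy(3) by simp
    with xy show "z \<in> ssum A (B \<inter> C)" by (blast intro: ssumI)
  qed
  show "ssum A (B \<inter> C) \<subseteq> ssum A B \<inter> C"
  proof
    fix z assume "z \<in> ssum A (B \<inter> C)"
    then obtain x y where xy: "x \<in> A" "y \<in> B \<inter> C" "z = x + y" by (rule ssumE)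
    then have "z \<in> C" using fvs.subspace_add[OF assms(1)] assms(2) by blast
    with xy show "z \<in> ssum A B \<inter> C" by (blast intro: ssumI)
  qed
qed

lemma ssum_Int_complement:
  assumes "fsubspace V" "X \<subseteq> V" "V \<subseteq> ssum X C"
  shows "ssum X (V \<inter> C) = V"
  using ssum_Int_modular[OF assms(1,2), of C] Int_absorb2[OF assms(3)] by (simp add: Int_commute)

lemma ssum_complement_Int:
  assumes "fsubspace C" "fsubspace V" "V \<subseteq> C" "X \<inter> C = {0}"
  shows "ssum X V \<inter> C = V"
  using ssum_Int_modular[OF assms(1,3), of X] assms(2,4)
  by (simp add: ssum_commute Int_commute ssum_zero_right)

lemma card_ssum_mult_card_Int:
  fixes S T :: "'a::{field,finite} vec set"
  assumes S: "fsubspace S" "finite S" and T: "fsubspace T" "finite T"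
  shows "card (ssum S T) * card (S \<inter> T) = card S * card T"
proof -
  define F where "F z = {p \<in> S \<times> T. fst p + snd p = z}" for z
  have fibre_card: "card (F z) = card (S \<inter> T)" if z: "z \<in> ssum S T" for z
  proof -
    obtain x y where xy: "x \<in> S" "y \<in> T" "z = x + y" using z by (rule ssumE)
    have "F z = (\<lambda>d. (x + d, y - d)) ` (S \<inter> T)"
    proof
      show "(\<lambda>d. (x + d, y - d)) ` (S \<inter> T) \<subseteq> F z"
        unfolding F_def using xy S T by (auto intro: fvs.subspace_add fvs.subspace_diff)
      show "F z \<subseteq> (\<lambda>d. (x + d, y - d)) ` (S \<inter> T)"
      proof
        fix p assume "p \<in> F z"
        then obtain x' y' where p: "p = (x', y')" "x' \<in> S" "y' \<in> T" "x' + y' = z"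
          unfolding F_def by auto
        have "x' - x = y - y'" using p xy by (simp add: algebra_simps)
        moreover have "x' - x \<in> S" "y - y' \<in> T" using S T xy p fvs.subspace_diff by blast+
        ultimately have "x' - x \<in> S \<inter> T" by simp
        moreover have "p = (x + (x' - x), y - (x' - x))" using p xy by (simp add: algebra_simps)
        ultimately show "p \<in> (\<lambda>d. (x + d, y - d)) ` (S \<inter> T)" by blast
      qed
    qed
    moreover have "inj_on (\<lambda>d. (x + d, y - d)) (S \<inter> T)" by (auto intro: inj_onI)
    ultimately show ?thesis by (simp add: card_image)
  qed
  have "S \<times> T = (\<Union>z\<in>ssum S T. F z)"
    unfolding F_def by (auto intro: ssumI)
  then have "card S * card T = card (\<Union>z\<in>ssum S T. F z)"
    by (metis card_cartesian_product)
  also have "\<dots> = (\<Sum>z\<in>ssum S T. card (F z))"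
    using S T by (intro card_UN_disjoint) (auto simp: finite_ssum F_def)
  also have "\<dots> = card (ssum S T) * card (S \<inter> T)" using fibre_card by simp
  finally show ?thesis by simp
qed

lemma fdim_zero [simp]: "fdim {0 :: 'a::field vec} = 0"
  using fvs.dim_span[of "{} :: 'a vec set"] fvs.dim_eq_card_independent[OF fvs.independent_empty]
  by simp

lemma fdim_eq_0_iff:
  fixes S :: "'a::{field,finite} vec set"
  assumes "fsubspace S" "finite S"
  shows "fdim S = 0 \<longleftrightarrow> S = {0}"
proof
  assume "fdim S = 0"
  then have "card S = 1" using card_fsubspace[OF assms] by simp
  moreover have "0 \<in> S" using assms(1) by (rule fvs.subspace_0)
  ultimately show "S = {0}" by (metis card_1_singletonE singletonD)
qed simp

lemma fdim_ssum_Int: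
  fixes S T :: "'a::{field,finite} vec set"
  assumes S: "fsubspace S" "finite S" and T: "fsubspace T" "finite T"
  shows "fdim (ssum S T) + fdim (S \<inter> T) = fdim S + fdim T"
proof -
  have "card (ssum S T) * card (S \<inter> T) = card S * card T"
    using card_ssum_mult_card_Int[OF S T] .
  moreover have "fsubspace (ssum S T)" "finite (ssum S T)" "fsubspace (S \<inter> T)" "finite (S \<inter> T)"
    using S T by (simp_all add: fsubspace_ssum finite_ssum fvs.subspace_inter)
  ultimately have "CARD('a) ^ (fdim (ssum S T) + fdim (S \<inter> T)) = CARD('a) ^ (fdim S + fdim T)"
    using S T by (simp add: card_fsubspace power_add)
  moreover have "1 < CARD('a)" using card_field_ge_two[where 'a='a] by simp
  ultimately show ?thesis by simp
qed

lemma fdim_ssum_direct: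
  fixes S T :: "'a::{field,finite} vec set"
  assumes "fsubspace S" "finite S" "fsubspace T" "finite T" "S \<inter> T = {0}"
  shows "fdim (ssum S T) = fdim S + fdim T"
  using fdim_ssum_Int[of S T] assms by simp

lemma fdim_mono:
  fixes S T :: "'a::{field,finite} vec set"
  assumes "fsubspace S" "fsubspace T" "finite T" "S \<subseteq> T"
  shows "fdim S \<le> fdim T"
proof -
  have "finite S" using assms(3,4) by (rule finite_subset[rotated])
  then have "CARD('a) ^ fdim S \<le> CARD('a) ^ fdim T"
    using assms card_mono[OF assms(3,4)] by (simp add: card_fsubspace)
  moreover have "1 < CARD('a)" using card_field_ge_two[where 'a='a] by simp
  ultimately show ?thesis by simp
qed

lemma fsubspace_eq_if_fdim_le:
  fixes S T :: "'a::{field,finite} vec set"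
  assumes "fsubspace S" "fsubspace T" "finite T" "S \<subseteq> T" "fdim T \<le> fdim S"
  shows "S = T"
proof -
  have "finite S" using assms(3,4) by (rule finite_subset[rotated])
  then have "card S = card T"
    using assms fdim_mono[OF assms(1-4)] by (simp add: card_fsubspace)
  then show ?thesis using assms(3,4) by (simp add: card_subset_eq)
qed

lemma fdim_add_le_fdim_Int:
  fixes S T E :: "'a::{field,finite} vec set"
  assumes "fsubspace S" "fsubspace T" "fsubspace E" "finite E" "ssum S T \<subseteq> E"
  shows "fdim S + fdim T \<le> fdim E + fdim (S \<inter> T)"
proof -
  have "S \<subseteq> E" "T \<subseteq> E"
    using assms(5) ssum_upper1[OF assms(2)] ssum_upper2[OF assms(1)] by blast+
  then have "finite S" "finite T" using assms(4) finite_subset by blast+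
  then show ?thesis
    using fdim_ssum_Int[of S T] fdim_mono[OF fsubspace_ssum assms(3-5)] assms(1,2) by simp
qed

lemma fsubspace_complement_exists:
  fixes X Y :: "'a::{field,finite} vec set"
  assumes X: "fsubspace X" and Y: "fsubspace Y" "finite Y" and XY: "X \<subseteq> Y"
  obtains C where "fsubspace C" "C \<subseteq> Y" "X \<inter> C = {0}" "ssum X C = Y"
proof -
  obtain BX where BX: "BX \<subseteq> X" "fvs.independent BX" "X \<subseteq> fvs.span BX" "card BX = fdim X"
    by (rule fvs.basis_exists)
  obtain B where B: "BX \<subseteq> B" "B \<subseteq> Y" "fvs.independent B" "Y \<subseteq> fvs.span B"
    using fvs.maximal_independent_subset_extend[of BX Y] BX XY by blast
  have fin: "finite B" "finite X" using B(2) XY Y(2) finite_subset by blast+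
  define C where "C = fvs.span (B - BX)"
  have "C \<subseteq> Y"
    unfolding C_def using B(2) Y(1) by (intro fvs.span_minimal) auto
  then have C: "fsubspace C" "C \<subseteq> Y" unfolding C_def by simp_all
  have "fvs.span BX = X" using BX X fvs.span_subspace by blast
  then have "ssum X C = fvs.span (BX \<union> (B - BX))"
    unfolding C_def fspan_Un by simp
  also have "BX \<union> (B - BX) = B" using B(1) by blast
  finally have sum: "ssum X C = Y" using B Y(1) fvs.span_subspace by blast
  have "fdim C \<le> card (B - BX)"
    unfolding C_def using fin(1) by (intro fvs.dim_le_card) auto
  also have "\<dots> = fdim Y - fdim X"
    using B BX fin(1) fvs.basis_card_eq_dim[of B Y] by (simp add: card_Diff_subset finite_subset)
  finally have "fdim C \<le> fdim Y - fdim X" .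
  moreover have "finite C" using C(2) Y(2) finite_subset by blast
  then have "fdim Y + fdim (X \<inter> C) = fdim X + fdim C"
    using fdim_ssum_Int[OF X fin(2) C(1)] sum by simp
  ultimately have "fdim (X \<inter> C) = 0"
    using fdim_mono[OF X Y XY] by linarith
  moreover have "finite (X \<inter> C)" using fin(2) by simp
  ultimately have "X \<inter> C = {0}"
    using fdim_eq_0_iff[OF fvs.subspace_inter[OF X C(1)]] by simp
  with C sum show ?thesis using that by blast
qed

lemma fdim_fspan_insert:
  fixes X :: "'a::{field,finite} vec set"
  assumes "finite X"
  shows "fdim (fvs.span (insert w X)) =
    (if w \<in> fvs.span X then fdim (fvs.span X) else Suc (fdim (fvs.span X)))"
proof (cases "w \<in> fvs.span X")
  case True
  then show ?thesis by (simp add: fvs.span_redundant)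
next
  case False
  have "fvs.span X \<inter> fvs.span {w} \<subseteq> {0}"
  proof
    fix x assume x: "x \<in> fvs.span X \<inter> fvs.span {w}"
    then obtain c where c: "x = sc c w" using fvs.span_singleton by auto
    have "c = 0"
    proof (rule ccontr)
      assume "c \<noteq> 0"
      then have "w = sc (inverse c) x" using c by (simp add: fvs.scale_scale)
      then show False using x False fvs.span_scale by blast
    qed
    then show "x \<in> {0}" using c by simp
  qed
  then have "fvs.span X \<inter> fvs.span {w} = {0}" using fvs.span_zero by blast
  moreover have "fdim (fvs.span {w}) = 1"
    using False fvs.span_zero fvs.dim_span_eq_card_independent[of "{w}"]
    by (auto simp: fvs.independent_insert)
  moreover have "fvs.span (insert w X) = ssum (fvs.span X) (fvs.span {w})"
    using fspan_Un[of X "{w}"] by simp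
  ultimately show ?thesis
    using False fdim_ssum_direct[of "fvs.span X" "fvs.span {w}"] assms by (simp add: finite_fspan)
qed

lemma fdim_fspan_Un_set_le:
  fixes X :: "'a::{field,finite} vec set"
  assumes "finite X"
  shows "fdim (fvs.span (X \<union> set ws)) \<le> fdim (fvs.span X) + length ws"
proof (induction ws)
  case (Cons w ws)
  have "X \<union> set (w # ws) = insert w (X \<union> set ws)" by simp
  then show ?case using Cons fdim_fspan_insert[of "X \<union> set ws" w] assms by simp
qed simp

section \<open>Subspaces meeting a given subspace in a given subspace\<close>

fun indep_lists :: "'a::field vec set \<Rightarrow> 'a vec set \<Rightarrow> nat \<Rightarrow> 'a vec list set" where
  "indep_lists Z Y 0 = {[]}"
| "indep_lists Z Y (Suc m) =
    {w # ws | w ws. ws \<in> indep_lists Z Y m \<and> w \<in> Y \<and> w \<notin> fvs.span (Z \<union> set ws)}"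

lemma indep_lists_iff:
  fixes Z Y :: "'a::{field,finite} vec set"
  assumes Z: "fsubspace Z" "finite Z"
  shows "ws \<in> indep_lists Z Y m \<longleftrightarrow>
    length ws = m \<and> set ws \<subseteq> Y \<and> fdim (fvs.span (Z \<union> set ws)) = fdim Z + m"
proof (induction m arbitrary: ws)
  case 0
  then show ?case using Z(1) by auto
next
  case (Suc m)
  show ?case
  proof (cases ws)
    case (Cons w ws')
    let ?X = "Z \<union> set ws'"
    have "Z \<union> set ws = insert w ?X" using Cons by simp
    then have "fdim (fvs.span (Z \<union> set ws)) =
        (if w \<in> fvs.span ?X then fdim (fvs.span ?X) else Suc (fdim (fvs.span ?X)))"
      using fdim_fspan_insert[of ?X w] Z(2) by simp
    moreover have "fdim (fvs.span ?X) \<le> fdim Z + length ws'"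
      using fdim_fspan_Un_set_le[of Z ws'] Z by simp
    ultimately show ?thesis using Suc.IH[of ws'] Cons by auto
  qed simp
qed

lemma finite_indep_lists:
  fixes Z Y :: "'a::{field,finite} vec set"
  assumes "fsubspace Z" "finite Z" "finite Y"
  shows "finite (indep_lists Z Y m)"
proof (rule finite_subset)
  show "indep_lists Z Y m \<subseteq> {ws. set ws \<subseteq> Y \<and> length ws = m}"
    using indep_lists_iff[OF assms(1,2)] by blast
qed (simp add: assms(3) finite_lists_length_eq)

lemma card_indep_lists:
  fixes Z Y :: "'a::{field,finite} vec set"
  assumes Z: "fsubspace Z" "finite Z" and Y: "fsubspace Y" "finite Y" and ZY: "Z \<subseteq> Y"
  shows "card (indep_lists Z Y m) = (\<Prod>i<m. CARD('a) ^ fdim Y - CARD('a) ^ (fdim Z + i))"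
proof (induction m)
  case (Suc m)
  let ?S = "SIGMA ws:indep_lists Z Y m. Y - fvs.span (Z \<union> set ws)"
  have "indep_lists Z Y (Suc m) = (\<lambda>(ws, w). w # ws) ` ?S" by auto
  moreover have "inj_on (\<lambda>(ws, w). w # ws) ?S" by (auto intro: inj_onI)
  ultimately have "card (indep_lists Z Y (Suc m)) = card ?S" by (simp add: card_image)
  also have "\<dots> = (\<Sum>ws\<in>indep_lists Z Y m. card (Y - fvs.span (Z \<union> set ws)))"
    using finite_indep_lists[OF Z Y(2)] Y(2) by (intro card_SigmaI) auto
  also have "\<dots> = card (indep_lists Z Y m) * (CARD('a) ^ fdim Y - CARD('a) ^ (fdim Z + m))"
  proof -
    have "card (Y - fvs.span (Z \<union> set ws)) = CARD('a) ^ fdim Y - CARD('a) ^ (fdim Z + m)"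
      if "ws \<in> indep_lists Z Y m" for ws
    proof -
      have ws: "set ws \<subseteq> Y" "fdim (fvs.span (Z \<union> set ws)) = fdim Z + m"
        using that indep_lists_iff[OF Z] by auto
      then have sub: "fvs.span (Z \<union> set ws) \<subseteq> Y"
        using ZY Y(1) by (intro fvs.span_minimal) auto
      then have fin: "finite (fvs.span (Z \<union> set ws))" using Y(2) finite_subset by blast
      then show ?thesis
        using card_Diff_subset[OF fin sub] card_fsubspace[OF fvs.subspace_span fin] ws(2)
          card_fsubspace[OF Y] by simp
    qed
    then show ?thesis by simp
  qed
  finally show ?case using Suc.IH by (simp add: mult.commute)
qed simp

definition subspaces_meeting :: "'a::field vec set \<Rightarrow> 'a vec set \<Rightarrow> 'a vec set \<Rightarrow> nat \<Rightarrow> 'a vec set set"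
  where "subspaces_meeting E W X m = {V. fsubspace V \<and> V \<subseteq> E \<and> fdim V = m \<and> V \<inter> W = X}"

lemma finite_subspaces_meeting: "finite E \<Longrightarrow> finite (subspaces_meeting E W X m)"
  unfolding subspaces_meeting_def by (rule finite_subset[of _ "Pow E"]) auto

lemma fspan_indep_list:
  fixes Z Y :: "'a::{field,finite} vec set"
  assumes Z: "fsubspace Z" "finite Z" and Y: "fsubspace Y" "finite Y"
    and ws: "ws \<in> indep_lists Z Y m"
  shows "fvs.span (set ws) \<in> subspaces_meeting Y Z {0} m"
    and "ws \<in> indep_lists {0} (fvs.span (set ws)) m"
proof -
  let ?S = "fvs.span (set ws)"
  have ws': "length ws = m" "set ws \<subseteq> Y" "fdim (fvs.span (Z \<union> set ws)) = fdim Z + m"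
    using ws indep_lists_iff[OF Z] by auto
  have SY: "?S \<subseteq> Y" using ws'(2) Y(1) by (intro fvs.span_minimal) auto
  then have fS: "finite ?S" using Y(2) finite_subset by blast
  have "fdim ?S \<le> m"
    using fvs.dim_le_card'[of "set ws"] card_length[of ws] ws'(1) by simp
  moreover have "fdim Z + m + fdim (Z \<inter> ?S) = fdim Z + fdim ?S"
    using fdim_ssum_Int[OF Z fvs.subspace_span fS] ws'(3) Z(1)
    by (simp add: fspan_Un)
  ultimately have dims: "fdim ?S = m" "fdim (Z \<inter> ?S) = 0" by linarith+
  then have "?S \<inter> Z = {0}"
    using fdim_eq_0_iff[OF fvs.subspace_inter[OF Z(1) fvs.subspace_span]] Z(2) by (simp add: Int_commute)
  with SY dims show "?S \<in> subspaces_meeting Y Z {0} m"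
    unfolding subspaces_meeting_def by simp
  have "set ws \<subseteq> ?S" by (rule fvs.span_superset)
  then show "ws \<in> indep_lists {0} ?S m"
    using ws'(1) dims(1) by (simp add: indep_lists_iff[OF fvs.subspace_single_0])
qed

lemma indep_list_of_subspace:
  fixes Z Y :: "'a::{field,finite} vec set"
  assumes Z: "fsubspace Z" "finite Z" and Y: "fsubspace Y" "finite Y"
    and V: "V \<in> subspaces_meeting Y Z {0} m" and ws: "ws \<in> indep_lists {0} V m"
  shows "ws \<in> indep_lists Z Y m" and "fvs.span (set ws) = V"
proof -
  have V': "fsubspace V" "V \<subseteq> Y" "fdim V = m" "V \<inter> Z = {0}"
    using V unfolding subspaces_meeting_def by auto
  have fV: "finite V" using V'(2) Y(2) finite_subset by blast
  have ws': "length ws = m" "set ws \<subseteq> V" "fdim (fvs.span (set ws)) = m"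
    using ws indep_lists_iff[OF fvs.subspace_single_0] by auto
  show SV: "fvs.span (set ws) = V"
    using ws' V'(1,3) fV fvs.span_minimal[OF ws'(2) V'(1)]
    by (intro fsubspace_eq_if_fdim_le) simp_all
  have "fdim (fvs.span (Z \<union> set ws)) = fdim Z + m"
    using fdim_ssum_direct[OF Z V'(1) fV] V'(3,4) SV Z(1)
    by (simp add: fspan_Un Int_commute)
  then show "ws \<in> indep_lists Z Y m"
    using indep_lists_iff[OF Z] ws' V'(2) by auto
qed

lemma card_subspaces_avoiding_mult:
  fixes Z Y :: "'a::{field,finite} vec set"
  assumes Z: "fsubspace Z" "finite Z" and Y: "fsubspace Y" "finite Y" and ZY: "Z \<subseteq> Y"
  shows "card (subspaces_meeting Y Z {0} m) * (\<Prod>i<m. CARD('a) ^ m - CARD('a) ^ i)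
       = (\<Prod>i<m. CARD('a) ^ fdim Y - CARD('a) ^ (fdim Z + i))"
proof -
  let ?A = "subspaces_meeting Y Z {0} m"
  have card_lists: "card (indep_lists {0} V m) = (\<Prod>i<m. CARD('a) ^ m - CARD('a) ^ i)"
    if "V \<in> ?A" for V
  proof -
    have V: "fsubspace V" "finite V" "fdim V = m"
      using that Y(2) finite_subset unfolding subspaces_meeting_def by auto
    then show ?thesis
      using card_indep_lists[OF fvs.subspace_single_0 _ V(1,2)] fvs.subspace_0[OF V(1)] by simp
  qed
  have "indep_lists Z Y m = (\<Union>V\<in>?A. indep_lists {0} V m)"
    using fspan_indep_list[OF Z Y] indep_list_of_subspace[OF Z Y] by blast
  moreover have "card (\<Union>V\<in>?A. indep_lists {0} V m) = (\<Sum>V\<in>?A. card (indep_lists {0} V m))"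
  proof (rule card_UN_disjoint)
    show "finite ?A" using Y(2) by (rule finite_subspaces_meeting)
    show "\<forall>V\<in>?A. finite (indep_lists {0} V m)"
      using Y(2) finite_subset[of _ Y]
      by (simp add: finite_indep_lists fvs.subspace_single_0 subspaces_meeting_def)
    show "\<forall>V\<in>?A. \<forall>V'\<in>?A. V \<noteq> V' \<longrightarrow> indep_lists {0} V m \<inter> indep_lists {0} V' m = {}"
      using indep_list_of_subspace(2)[OF Z Y] by blast
  qed
  ultimately have "card (indep_lists Z Y m) = (\<Sum>V\<in>?A. card (indep_lists {0} V m))"
    by simp
  then show ?thesis using card_indep_lists[OF Z Y ZY] card_lists by simp
qed

lemma gbinom_eq_prod_ratio:
  "b \<le> a \<Longrightarrow> gbinom Q (int a) (int b) = (\<Prod>i<b. Q ^ a - Q ^ i) / (\<Prod>i<b. Q ^ b - Q ^ i)"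
  by (simp add: gbinom_def prod_dividef)

lemma of_nat_prod_pow_diff:
  assumes "1 \<le> q" "c + m \<le> a"
  shows "real (\<Prod>i<m. q ^ a - q ^ (c + i)) = (\<Prod>i<m. real q ^ a - real q ^ (c + i))"
  unfolding of_nat_prod using assms by (intro prod.cong) (simp_all add: of_nat_diff power_increasing)

lemma card_subspaces_avoiding:
  fixes Z Y :: "'a::{field,finite} vec set"
  assumes Z: "fsubspace Z" "finite Z" and Y: "fsubspace Y" "finite Y" and ZY: "Z \<subseteq> Y"
  shows "real (card (subspaces_meeting Y Z {0} m)) =
    real CARD('a) ^ (fdim Z * m) * gbinom (real CARD('a)) (int (fdim Y - fdim Z)) (int m)"
proof -
  define q where "q = CARD('a)"
  define z y where "z = fdim Z" and "y = fdim Y"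
  have q: "1 < q" using card_field_ge_two[where 'a='a] unfolding q_def by simp
  have zy: "z \<le> y" unfolding z_def y_def using fdim_mono[OF Z(1) Y ZY] .
  have count: "card (subspaces_meeting Y Z {0} m) * (\<Prod>i<m. q ^ (0 + m) - q ^ (0 + i))
      = (\<Prod>i<m. q ^ y - q ^ (z + i))"
    using card_subspaces_avoiding_mult[OF Z Y ZY, of m] unfolding q_def z_def y_def by simp
  have pos: "(\<Prod>i<m. q ^ (0 + m) - q ^ (0 + i)) > 0"
    using q by (simp add: prod_pos power_strict_increasing)
  show ?thesis
  proof (cases "m \<le> y - z")
    case True
    have "(\<Prod>i<m. real q ^ y - real q ^ (z + i)) =
        real q ^ (z * m) * (\<Prod>i<m. real q ^ (y - z) - real q ^ i)"
    proof -
      have "real q ^ y - real q ^ (z + i) = real q ^ z * (real q ^ (y - z) - real q ^ i)" for i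
        using zy by (simp add: algebra_simps flip: power_add)
      then show ?thesis by (simp add: prod.distrib power_mult)
    qed
    moreover have "(\<Prod>i<m. real q ^ m - real q ^ i) \<noteq> 0"
      using q by (simp add: power_strict_increasing)
    ultimately show ?thesis
      using arg_cong[OF count, of real] True q
        of_nat_prod_pow_diff[of q z m y] of_nat_prod_pow_diff[of q 0 m m]
      by (simp add: gbinom_eq_prod_ratio q_def z_def y_def field_simps)
  next
    case False
    then have "(\<Prod>i<m. q ^ y - q ^ (z + i)) = 0"
      using zy by (intro prod_zero bexI[of _ "y - z"]) auto
    with count pos have "card (subspaces_meeting Y Z {0} m) = 0"
      by (metis mult_eq_0_iff less_irrefl)
    with False show ?thesis by (simp add: gbinom_def z_def y_def)
  qed
qed

lemma bij_betw_subspaces_meeting_complement: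
  fixes X W C :: "'a::{field,finite} vec set"
  assumes X: "fsubspace X" and W: "fsubspace W" and C: "fsubspace C"
    and fin: "finite (ssum X C)" and XW: "X \<subseteq> W" and XC: "X \<inter> C = {0}" and m: "fdim X \<le> m"
  shows "bij_betw (\<lambda>V. V \<inter> C) (subspaces_meeting (ssum X C) W X m)
    (subspaces_meeting C (W \<inter> C) {0} (m - fdim X))"
proof (rule bij_betw_byWitness[where f' = "ssum X"])
  have finX: "finite X" using finite_subset[OF ssum_upper1[OF C] fin] .
  have finC: "finite C" using finite_subset[OF ssum_upper2[OF X] fin] .
  have direct: "fdim (ssum X V') = fdim X + fdim V'" if "fsubspace V'" "V' \<subseteq> C" for V'
  proof (rule fdim_ssum_direct[OF X finX that(1)])
    show "finite V'" using finite_subset[OF that(2) finC] .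
    show "X \<inter> V' = {0}" using that XC fvs.subspace_0[OF X] fvs.subspace_0[OF that(1)] by blast
  qed
  show "\<forall>V\<in>subspaces_meeting (ssum X C) W X m. ssum X (V \<inter> C) = V"
  proof
    fix V assume "V \<in> subspaces_meeting (ssum X C) W X m"
    then have "fsubspace V" "X \<subseteq> V" "V \<subseteq> ssum X C" unfolding subspaces_meeting_def by auto
    then show "ssum X (V \<inter> C) = V" by (rule ssum_Int_complement)
  qed
  show "\<forall>V'\<in>subspaces_meeting C (W \<inter> C) {0} (m - fdim X). ssum X V' \<inter> C = V'"
    using ssum_complement_Int[OF C _ _ XC] unfolding subspaces_meeting_def by auto
  show "(\<lambda>V. V \<inter> C) ` subspaces_meeting (ssum X C) W X m
      \<subseteq> subspaces_meeting C (W \<inter> C) {0} (m - fdim X)"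
  proof (rule image_subsetI)
    fix V assume "V \<in> subspaces_meeting (ssum X C) W X m"
    then have V: "fsubspace V" "V \<subseteq> ssum X C" "fdim V = m" "V \<inter> W = X"
      unfolding subspaces_meeting_def by auto
    have VC: "fsubspace (V \<inter> C)" using V(1) C by (rule fvs.subspace_inter)
    have "X \<subseteq> V" using V(4) by auto
    then have "fdim V = fdim X + fdim (V \<inter> C)"
      using direct[OF VC] ssum_Int_complement[OF V(1) _ V(2)] by simp
    moreover have "V \<inter> C \<inter> (W \<inter> C) = {0}" using V(4) XC by auto
    ultimately show "V \<inter> C \<in> subspaces_meeting C (W \<inter> C) {0} (m - fdim X)"
      unfolding subspaces_meeting_def using VC V(3) by simp
  qed
  show "ssum X ` subspaces_meeting C (W \<inter> C) {0} (m - fdim X) \<subseteq> subspaces_meeting (ssum X C) W X m"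
  proof (rule image_subsetI)
    fix V' assume "V' \<in> subspaces_meeting C (W \<inter> C) {0} (m - fdim X)"
    then have V': "fsubspace V'" "V' \<subseteq> C" "fdim V' = m - fdim X" "V' \<inter> (W \<inter> C) = {0}"
      unfolding subspaces_meeting_def by auto
    have "ssum X V' \<inter> W = ssum X (V' \<inter> W)" by (rule ssum_Int_modular[OF W XW])
    also have "V' \<inter> W = {0}" using V'(2,4) by auto
    finally have "ssum X V' \<inter> W = X" using X by (simp add: ssum_zero_right)
    moreover have "ssum X V' \<subseteq> ssum X C"
      using V'(2) ssum_upper1[OF C, of X] ssum_upper2[OF X, of C]
      by (intro ssum_least[OF fsubspace_ssum[OF X C]]) auto
    ultimately show "ssum X V' \<in> subspaces_meeting (ssum X C) W X m"
      unfolding subspaces_meeting_def using direct[OF V'(1,2)] V'(3) m X V'(1)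
      by (simp add: fsubspace_ssum)
  qed
qed

lemma card_subspaces_meeting:
  fixes X W E :: "'a::{field,finite} vec set"
  assumes X: "fsubspace X" and W: "fsubspace W" and E: "fsubspace E" "finite E"
    and XW: "X \<subseteq> W" and WE: "W \<subseteq> E" and m: "fdim X \<le> m"
  shows "real (card (subspaces_meeting E W X m)) =
    real CARD('a) ^ ((fdim W - fdim X) * (m - fdim X))
      * gbinom (real CARD('a)) (int (fdim E - fdim W)) (int (m - fdim X))"
proof -
  have XE: "X \<subseteq> E" using XW WE by (rule order_trans)
  then have finX: "finite X" using E(2) by (rule finite_subset)
  obtain C where C: "fsubspace C" "C \<subseteq> E" "X \<inter> C = {0}" "ssum X C = E"
    using fsubspace_complement_exists[OF X E XE] .
  have finC: "finite C" using C(2) E(2) by (rule finite_subset)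
  have WC: "fsubspace (W \<inter> C)" "finite (W \<inter> C)" "W \<inter> C \<subseteq> C"
    using fvs.subspace_inter[OF W C(1)] finC by auto
  have "ssum X (W \<inter> C) = W" using ssum_Int_complement[OF W XW] C(4) WE by simp
  moreover have "X \<inter> (W \<inter> C) = {0}" using C(3) XW by blast
  ultimately have "fdim W = fdim X + fdim (W \<inter> C)"
    using fdim_ssum_direct[OF X finX WC(1,2)] by simp
  moreover have "fdim E = fdim X + fdim C"
    using fdim_ssum_direct[OF X finX C(1) finC C(3)] C(4) by simp
  moreover have "card (subspaces_meeting E W X m) =
      card (subspaces_meeting C (W \<inter> C) {0} (m - fdim X))"
    using bij_betw_subspaces_meeting_complement[OF X W C(1) _ XW C(3) m] C(4) E(2)
    by (simp add: bij_betw_same_card)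
  ultimately show ?thesis
    using card_subspaces_avoiding[OF WC(1,2) C(1) finC WC(3), of "m - fdim X"] by simp
qed

lemma card_subspaces_meeting_int:
  fixes X W E :: "'a::{field,finite} vec set"
  assumes X: "fsubspace X" and W: "fsubspace W" and E: "fsubspace E" "finite E"
    and XW: "X \<subseteq> W" and WE: "W \<subseteq> E"
  shows "real (card (subspaces_meeting E W X m)) =
    real CARD('a) powi ((int (fdim W) - int (fdim X)) * (int m - int (fdim X)))
      * gbinom (real CARD('a)) (int (fdim E) - int (fdim W)) (int m - int (fdim X))"
proof (cases "fdim X \<le> m")
  case True
  have "fdim X \<le> fdim W" "fdim W \<le> fdim E"
    using fdim_mono[OF X W finite_subset[OF WE E(2)] XW] fdim_mono[OF W E WE] .
  with True have "(int (fdim W) - int (fdim X)) * (int m - int (fdim X))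
      = int ((fdim W - fdim X) * (m - fdim X))"
    and "int (fdim E) - int (fdim W) = int (fdim E - fdim W)"
    and "int m - int (fdim X) = int (m - fdim X)" by (simp_all add: of_nat_diff)
  then show ?thesis using card_subspaces_meeting[OF X W E XW WE True]
    by (simp only: power_int_of_nat)
next
  case False
  have "fdim X \<le> fdim V" if "V \<in> subspaces_meeting E W X m" for V
  proof -
    have V: "fsubspace V" "V \<subseteq> E" "V \<inter> W = X" using that unfolding subspaces_meeting_def by auto
    show ?thesis using fdim_mono[OF X V(1) finite_subset[OF V(2) E(2)]] V(3) by auto
  qed
  with False have "subspaces_meeting E W X m = {}" unfolding subspaces_meeting_def by fastforce
  with False show ?thesis by (simp add: gbinom_def)
qed

lemma gbinom_diag:
  assumes "1 < Q"
  shows "gbinom Q (int d) (int d) = 1"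
proof -
  have "(\<Prod>i<d. Q ^ d - Q ^ i) \<noteq> 0" using assms by (simp add: power_strict_increasing)
  then show ?thesis by (simp add: gbinom_eq_prod_ratio)
qed

lemma card_subspaces_fdim_Int:
  fixes U E :: "'a::{field,finite} vec set"
  assumes U: "fsubspace U" and E: "fsubspace E" "finite E" and UE: "U \<subseteq> E"
    and v: "v \<le> fdim U" and d: "fdim E = fdim U + d"
  shows "real (card {V. fsubspace V \<and> V \<subseteq> E \<and> fdim V = v + d \<and> fdim (V \<inter> U) = v}) =
    gbinom (real CARD('a)) (int (fdim U)) (int v) * real CARD('a) ^ ((fdim U - v) * d)"
proof -
  have finU: "finite U" using UE E(2) by (rule finite_subset)
  let ?Xs = "subspaces_meeting U {0} {0} v"
  have "{V. fsubspace V \<and> V \<subseteq> E \<and> fdim V = v + d \<and> fdim (V \<inter> U) = v}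
      = (\<Union>X\<in>?Xs. subspaces_meeting E U X (v + d))"
    unfolding subspaces_meeting_def using U fvs.subspace_0 by (auto intro: fvs.subspace_inter)
  moreover have "card (\<Union>X\<in>?Xs. subspaces_meeting E U X (v + d))
      = (\<Sum>X\<in>?Xs. card (subspaces_meeting E U X (v + d)))"
    using finU E(2) by (intro card_UN_disjoint) (auto simp: finite_subspaces_meeting subspaces_meeting_def)
  moreover have "real (card (subspaces_meeting E U X (v + d))) = real CARD('a) ^ ((fdim U - v) * d)"
    if "X \<in> ?Xs" for X
  proof -
    have X: "fsubspace X" "X \<subseteq> U" "fdim X = v" using that unfolding subspaces_meeting_def by auto
    have "1 < real CARD('a)" using card_field_ge_two[where 'a='a] by simp
    then show ?thesis
      using card_subspaces_meeting[OF X(1) U E X(2) UE, of "v + d"] X(3) d by (simp add: gbinom_diag)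
  qed
  moreover have "real (card ?Xs) = gbinom (real CARD('a)) (int (fdim U)) (int v)"
    using card_subspaces_avoiding[OF fvs.subspace_single_0 _ U finU, of v] fvs.subspace_0[OF U] by simp
  ultimately show ?thesis by simp
qed

section \<open>Subspaces of a direct sum\<close>

interpretation fvp: vector_space_pair "sc :: 'a::field \<Rightarrow> 'a vec \<Rightarrow> 'a vec" "sc :: 'a \<Rightarrow> 'a vec \<Rightarrow> 'a vec" ..

lemma findependent_if_card_le_fdim:
  fixes S :: "'a::field vec set"
  assumes fin: "finite S" and card: "card S \<le> fdim S"
  shows "fvs.independent S"
proof (rule ccontr)
  assume "\<not> fvs.independent S"
  then obtain a where a: "a \<in> S" "a \<in> fvs.span (S - {a})" unfolding fvs.dependent_def by blast
  then have "fvs.span S = fvs.span (S - {a})"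
    using fvs.span_redundant[OF a(2)] by (simp add: insert_absorb)
  then have "fdim S \<le> card (S - {a})"
    using fvs.dim_le_card'[of "S - {a}"] fin fvs.dim_span by (metis finite_Diff)
  also have "\<dots> < card S" by (rule card_Diff1_less[OF fin a(1)])
  finally show False using card by simp
qed

lemma fsubspace_direct_basis:
  fixes A B :: "'a::{field,finite} vec set"
  assumes A: "fsubspace A" "finite A" and B: "fsubspace B" "finite B" and AB: "A \<inter> B = {0}"
  obtains BA BB where "BA \<subseteq> A" "BB \<subseteq> B" "BA \<inter> BB = {}" "fvs.independent (BA \<union> BB)"
    "fvs.span BA = A" "fvs.span BB = B" "card BA = fdim A" "card BB = fdim B"
proof -
  obtain BA where BA: "BA \<subseteq> A" "fvs.independent BA" "A \<subseteq> fvs.span BA" "card BA = fdim A"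
    by (rule fvs.basis_exists)
  obtain BB where BB: "BB \<subseteq> B" "fvs.independent BB" "B \<subseteq> fvs.span BB" "card BB = fdim B"
    by (rule fvs.basis_exists)
  have fin: "finite BA" "finite BB"
    using finite_subset[OF BA(1) A(2)] finite_subset[OF BB(1) B(2)] .
  have span: "fvs.span BA = A" "fvs.span BB = B"
    using fvs.span_subspace[OF BA(1,3) A(1)] fvs.span_subspace[OF BB(1,3) B(1)] .
  have "BA \<inter> BB \<subseteq> {0}" using BA(1) BB(1) AB by auto
  moreover have "0 \<notin> BA" using BA(2) fvs.dependent_zero by auto
  ultimately have disj: "BA \<inter> BB = {}" by auto
  have "card (BA \<union> BB) = fdim (ssum A B)"
    using card_Un_disjoint[OF fin disj] fdim_ssum_direct[OF A B AB] BA(4) BB(4) by simp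
  also have "\<dots> = fdim (BA \<union> BB)"
    using fspan_Un[of BA BB] span fvs.dim_span[of "BA \<union> BB"] by simp
  finally have "fvs.independent (BA \<union> BB)"
    using fin by (intro findependent_if_card_le_fdim) auto
  with that BA(1,4) BB(1,4) disj span show ?thesis by blast
qed

lemma linear_iso_ssum_exists:
  fixes A B A' B' :: "'a::{field,finite} vec set"
  assumes A: "fsubspace A" "finite A" and B: "fsubspace B" "finite B" and AB: "A \<inter> B = {0}"
    and A': "fsubspace A'" "finite A'" and B': "fsubspace B'" "finite B'" and A'B': "A' \<inter> B' = {0}"
    and dims: "fdim A = fdim A'" "fdim B = fdim B'"
  obtains f where "Vector_Spaces.linear sc sc f" "inj_on f (ssum A B)" "f ` A = A'" "f ` B = B'"
proof -
  obtain BA BB where b: "BA \<subseteq> A" "BB \<subseteq> B" "BA \<inter> BB = {}" "fvs.independent (BA \<union> BB)"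
    "fvs.span BA = A" "fvs.span BB = B" "card BA = fdim A" "card BB = fdim B"
    using fsubspace_direct_basis[OF A B AB] .
  obtain BA' BB' where b': "BA' \<subseteq> A'" "BB' \<subseteq> B'" "BA' \<inter> BB' = {}" "fvs.independent (BA' \<union> BB')"
    "fvs.span BA' = A'" "fvs.span BB' = B'" "card BA' = fdim A'" "card BB' = fdim B'"
    using fsubspace_direct_basis[OF A' B' A'B'] .
  have fin: "finite BA" "finite BB" "finite BA'" "finite BB'"
    using finite_subset[OF b(1) A(2)] finite_subset[OF b(2) B(2)]
      finite_subset[OF b'(1) A'(2)] finite_subset[OF b'(2) B'(2)] .
  obtain gA where gA: "bij_betw gA BA BA'"
    using finite_same_card_bij[OF fin(1,3)] b(7) b'(7) dims(1) by auto
  obtain gB where gB: "bij_betw gB BB BB'"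
    using finite_same_card_bij[OF fin(2,4)] b(8) b'(8) dims(2) by auto
  define g where "g x = (if x \<in> BA then gA x else gB x)" for x
  have "bij_betw g BA BA'" using gA by (rule bij_betw_cong[THEN iffD1, rotated]) (simp add: g_def)
  moreover have "bij_betw g BB BB'"
    using gB b(3) by (intro bij_betw_cong[THEN iffD1, rotated, OF gB]) (auto simp: g_def)
  ultimately have g: "bij_betw g (BA \<union> BB) (BA' \<union> BB')" using b'(3) by (rule bij_betw_combine)
  obtain f where f: "Vector_Spaces.linear sc sc f" "\<forall>x\<in>BA \<union> BB. f x = g x"
    using fvp.linear_independent_extend[OF b(4)] by blast
  have fg: "bij_betw f (BA \<union> BB) (BA' \<union> BB')"
    by (rule bij_betw_cong[THEN iffD2, OF _ g]) (use f(2) in auto)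
  have "f ` BA = g ` BA" "f ` BB = g ` BB" using f(2) by (auto intro: image_cong)
  then have "f ` BA = BA'" "f ` BB = BB'"
    using \<open>bij_betw g BA BA'\<close> \<open>bij_betw g BB BB'\<close> by (simp_all add: bij_betw_imp_surj_on)
  then have "f ` A = A'" "f ` B = B'"
    using fvp.linear_span_image[OF f(1)] b(5,6) b'(5,6) by metis+
  moreover have "inj_on f (ssum A B)"
    using fvp.linear_inj_on_span_independent_image[OF f(1), of "BA \<union> BB"] fg b'(4) b(5,6)
    by (simp add: bij_betw_def fspan_Un)
  ultimately show ?thesis using that f(1) by blast
qed

definition subspaces_of_sum :: "'a::field vec set \<Rightarrow> 'a vec set \<Rightarrow> nat \<Rightarrow> nat \<Rightarrow> nat \<Rightarrow> 'a vec set set"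
  where "subspaces_of_sum A B n c e =
    {V. fsubspace V \<and> V \<subseteq> ssum A B \<and> fdim V = n \<and> fdim (V \<inter> A) = c \<and> fdim (V \<inter> B) = e}"

lemma finite_subspaces_of_sum: "finite (ssum A B) \<Longrightarrow> finite (subspaces_of_sum A B n c e)"
  unfolding subspaces_of_sum_def by (rule finite_subset[of _ "Pow (ssum A B)"]) auto

lemma card_subspaces_of_sum_le:
  fixes A B A' B' :: "'a::{field,finite} vec set"
  assumes A: "fsubspace A" "finite A" and B: "fsubspace B" "finite B" and AB: "A \<inter> B = {0}"
    and A': "fsubspace A'" "finite A'" and B': "fsubspace B'" "finite B'" and A'B': "A' \<inter> B' = {0}"
    and dims: "fdim A = fdim A'" "fdim B = fdim B'"
  shows "card (subspaces_of_sum A B n c e) \<le> card (subspaces_of_sum A' B' n c e)"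
proof -
  obtain f where f: "Vector_Spaces.linear sc sc f" "inj_on f (ssum A B)" "f ` A = A'" "f ` B = B'"
    using linear_iso_ssum_exists[OF A B AB A' B' A'B' dims] .
  let ?M = "ssum A B"
  have finM: "finite ?M" using A(2) B(2) by (rule finite_ssum)
  have AM: "A \<subseteq> ?M" and BM: "B \<subseteq> ?M" using ssum_upper1[OF B(1)] ssum_upper2[OF A(1)] .
  have fM: "f ` ?M = ssum A' B'"
    using fvp.linear_add[OF f(1)] f(3,4) unfolding ssum_def by (auto simp: image_iff) metis
  have fdim_image: "fdim (f ` U) = fdim U" if "fsubspace U" "U \<subseteq> ?M" for U
  proof (rule fdim_eq_if_card_eq)
    show "finite U" using that(2) finM by (rule finite_subset)
    then show "finite (f ` U)" by simp
    show "card (f ` U) = card U" using inj_on_subset[OF f(2) that(2)] by (rule card_image)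
  qed (use that fvp.linear_subspace_image[OF f(1)] in auto)
  have "(\<lambda>V. f ` V) ` subspaces_of_sum A B n c e \<subseteq> subspaces_of_sum A' B' n c e"
  proof (rule image_subsetI)
    fix V assume "V \<in> subspaces_of_sum A B n c e"
    then have V: "fsubspace V" "V \<subseteq> ?M" "fdim V = n" "fdim (V \<inter> A) = c" "fdim (V \<inter> B) = e"
      unfolding subspaces_of_sum_def by auto
    have "f ` V \<inter> A' = f ` (V \<inter> A)" "f ` V \<inter> B' = f ` (V \<inter> B)"
      using inj_on_image_Int[OF f(2) V(2) AM] inj_on_image_Int[OF f(2) V(2) BM] f(3,4) by simp_all
    moreover have "fdim (f ` (V \<inter> A)) = c" "fdim (f ` (V \<inter> B)) = e"
      using fdim_image[of "V \<inter> A"] fdim_image[of "V \<inter> B"] V A(1) B(1)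
      by (auto simp: fvs.subspace_inter)
    moreover have "f ` V \<subseteq> ssum A' B'" using V(2) fM by blast
    ultimately show "f ` V \<in> subspaces_of_sum A' B' n c e"
      unfolding subspaces_of_sum_def using V fdim_image fvp.linear_subspace_image[OF f(1)]
      by auto
  qed
  moreover have "inj_on (\<lambda>V. f ` V) (subspaces_of_sum A B n c e)"
    using inj_on_image_eq_iff[OF f(2)] by (auto simp: subspaces_of_sum_def intro!: inj_onI)
  ultimately show ?thesis
    using A'(2) B'(2) by (intro card_inj_on_le) (simp_all add: finite_subspaces_of_sum finite_ssum)
qed

lemma card_subspaces_of_sum_eq:
  fixes A B A' B' :: "'a::{field,finite} vec set"
  assumes "fsubspace A" "finite A" "fsubspace B" "finite B" "A \<inter> B = {0}"
    and "fsubspace A'" "finite A'" "fsubspace B'" "finite B'" "A' \<inter> B' = {0}"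
    and "fdim A = fdim A'" "fdim B = fdim B'"
  shows "card (subspaces_of_sum A B n c e) = card (subspaces_of_sum A' B' n c e)"
  using card_subspaces_of_sum_le[OF assms] card_subspaces_of_sum_le[OF assms(6-10,1-5) assms(11,12)[symmetric]]
  by (rule antisym)

definition coord_subspace :: "nat set \<Rightarrow> 'a::zero vec set"
  where "coord_subspace I = {v. \<forall>i. i \<notin> I \<longrightarrow> v i = 0}"

lemma fsubspace_coord_subspace: "fsubspace (coord_subspace I)"
  unfolding fvs.subspace_def coord_subspace_def by (auto simp: sc_def)

lemma coord_subspace_eq_image_PiE:
  "coord_subspace I = (\<lambda>f i. if i \<in> I then f i else 0) ` (I \<rightarrow>\<^sub>E UNIV)"
proof
  show "coord_subspace I \<subseteq> (\<lambda>f i. if i \<in> I then f i else 0) ` (I \<rightarrow>\<^sub>E UNIV)"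
  proof
    fix v assume "v \<in> coord_subspace I"
    then have "v = (\<lambda>i. if i \<in> I then restrict v I i else 0)"
      unfolding coord_subspace_def by auto
    then show "v \<in> (\<lambda>f i. if i \<in> I then f i else 0) ` (I \<rightarrow>\<^sub>E UNIV)"
      by (rule image_eqI[where x = "restrict v I"]) simp
  qed
  show "(\<lambda>f i. if i \<in> I then f i else 0) ` (I \<rightarrow>\<^sub>E UNIV) \<subseteq> coord_subspace I"
    unfolding coord_subspace_def by auto
qed

lemma card_coord_subspace:
  assumes "finite I"
  shows "finite (coord_subspace I :: 'a::{field,finite} vec set)"
    and "card (coord_subspace I :: 'a vec set) = CARD('a) ^ card I"
proof -
  have "inj_on (\<lambda>f i. if i \<in> I then f i else (0::'a)) (I \<rightarrow>\<^sub>E UNIV)"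
    by (rule inj_onI) (auto simp: fun_eq_iff PiE_def extensional_def, metis)
  then show "finite (coord_subspace I :: 'a vec set)"
    and "card (coord_subspace I :: 'a vec set) = CARD('a) ^ card I"
    using assms by (simp_all add: coord_subspace_eq_image_PiE card_image card_PiE finite_PiE)
qed

lemma fdim_coord_subspace:
  assumes "finite I"
  shows "fdim (coord_subspace I :: 'a::{field,finite} vec set) = card I"
proof -
  have "CARD('a) ^ fdim (coord_subspace I :: 'a vec set) = CARD('a) ^ card I"
    using card_fsubspace[OF fsubspace_coord_subspace card_coord_subspace(1)[OF assms, where 'a='a]]
      card_coord_subspace(2)[OF assms, where 'a='a] by simp
  moreover have "1 < CARD('a)" using card_field_ge_two[where 'a='a] by simp
  ultimately show ?thesis by simp
qed

lemma coord_subspace_Int_disjoint: "I \<inter> J = {} \<Longrightarrow> coord_subspace I \<inter> coord_subspace J = {0}"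
  unfolding coord_subspace_def by (auto simp: fun_eq_iff) blast

lemma Fk_eq_coord_subspace: "Fk k = coord_subspace {..<k}"
  unfolding Fk_def coord_subspace_def by auto

lemma fsubspace_Fk: "fsubspace (Fk k)"
  unfolding Fk_eq_coord_subspace by (rule fsubspace_coord_subspace)

lemma finite_Fk: "finite (Fk k :: 'a::{field,finite} vec set)"
  unfolding Fk_eq_coord_subspace by (simp add: card_coord_subspace)

lemma fdim_Fk: "fdim (Fk k :: 'a::{field,finite} vec set) = k"
  unfolding Fk_eq_coord_subspace by (simp add: fdim_coord_subspace)

lemma Nt_eq_card_subspaces_of_sum:
  fixes A B :: "'a::{field,finite} vec set"
  assumes A: "fsubspace A" "finite A" and B: "fsubspace B" "finite B" and AB: "A \<inter> B = {0}"
  shows "Nt TYPE('a) t (fdim A) (fdim B) c e = card (subspaces_of_sum A B (t + c + e) c e)"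
proof -
  let ?I = "{..<fdim A}" and ?J = "{fdim A..<fdim A + fdim B}"
  have "{v \<in> Fk (fdim A + fdim B). \<forall>i<fdim A. v i = (0::'a)} = coord_subspace ?J"
    unfolding Fk_def coord_subspace_def by auto
  then have "Nt TYPE('a) t (fdim A) (fdim B) c e =
      card (subspaces_of_sum (coord_subspace ?I) (coord_subspace ?J :: 'a vec set) (t + c + e) c e)"
    unfolding Nt_def Let_def subspaces_of_sum_def Fk_eq_coord_subspace by simp
  also have "\<dots> = card (subspaces_of_sum A B (t + c + e) c e)"
    by (rule card_subspaces_of_sum_eq[OF fsubspace_coord_subspace _ fsubspace_coord_subspace _
          coord_subspace_Int_disjoint A B AB])
      (auto simp: card_coord_subspace fdim_coord_subspace)
  finally show ?thesis .
qed

section \<open>Subspaces with prescribed intersections with two subspaces\<close>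

definition profile_subspaces ::
    "'a::field vec set \<Rightarrow> 'a vec set \<Rightarrow> 'a vec set \<Rightarrow> nat \<Rightarrow> nat \<Rightarrow> nat \<Rightarrow> nat \<Rightarrow> 'a vec set set"
  where "profile_subspaces E U1 U2 n v0 v1 v2 =
    {V. fsubspace V \<and> V \<subseteq> E \<and> fdim V = n \<and> fdim (V \<inter> (U1 \<inter> U2)) = v0
        \<and> fdim (V \<inter> U1) = v1 \<and> fdim (V \<inter> U2) = v2}"

locale complemented_pair =
  fixes U1 U2 C1 C2 :: "'a::{field,finite} vec set"
  assumes U1: "fsubspace U1" "finite U1" and U2: "fsubspace U2" "finite U2"
    and C1: "fsubspace C1" "(U1 \<inter> U2) \<inter> C1 = {0}" "ssum (U1 \<inter> U2) C1 = U1"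
    and C2: "fsubspace C2" "(U1 \<inter> U2) \<inter> C2 = {0}" "ssum (U1 \<inter> U2) C2 = U2"
begin

abbreviation "U0 \<equiv> U1 \<inter> U2"
abbreviation "W \<equiv> ssum U1 U2"
abbreviation "D \<equiv> ssum C1 C2"

definition phi :: "'a vec set \<Rightarrow> 'a vec set" where "phi V = ssum V U0 \<inter> D"

lemma U0: "fsubspace U0" "finite U0"
  using U1 U2 by (auto intro: fvs.subspace_inter)

lemma C_sub: "C1 \<subseteq> U1" "C2 \<subseteq> U2"
  using ssum_upper2[OF U0(1), of C1] ssum_upper2[OF U0(1), of C2] C1(3) C2(3) by auto

lemma W: "fsubspace W" "finite W"
  using U1 U2 by (simp_all add: fsubspace_ssum finite_ssum)

lemma D: "fsubspace D" "finite D" "D \<subseteq> W"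
  using C1(1) C2(1) W(1) C_sub finite_subset[OF C_sub(1) U1(2)] finite_subset[OF C_sub(2) U2(2)]
  by (simp_all add: fsubspace_ssum finite_ssum ssum_mono)

lemma ssum_U0_D: "ssum U0 D = W"
proof
  show "ssum U0 D \<subseteq> W"
  proof (rule ssum_least[OF W(1)])
    show "U0 \<subseteq> W" using ssum_upper1[OF U2(1), of U1] by blast
  qed (rule D(3))
  have "U1 \<subseteq> ssum U0 D" "U2 \<subseteq> ssum U0 D"
    using C1(3) C2(3) ssum_mono[of U0 U0 C1 D] ssum_mono[of U0 U0 C2 D]
      ssum_upper1[OF C2(1), of C1] ssum_upper2[OF C1(1), of C2] by auto
  then show "W \<subseteq> ssum U0 D" by (intro ssum_least fsubspace_ssum U0(1) D(1))
qed

lemma U0_Int_D: "U0 \<inter> D = {0}"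
proof -
  have "fdim D + fdim (C1 \<inter> C2) = fdim C1 + fdim C2"
    using fdim_ssum_Int C1(1) C2(1) finite_subset[OF C_sub(1) U1(2)] finite_subset[OF C_sub(2) U2(2)]
    by blast
  moreover have "fdim U1 = fdim U0 + fdim C1" "fdim U2 = fdim U0 + fdim C2"
    using fdim_ssum_direct[OF U0 C1(1) _ C1(2)] fdim_ssum_direct[OF U0 C2(1) _ C2(2)] C1(3) C2(3)
      finite_subset[OF C_sub(1) U1(2)] finite_subset[OF C_sub(2) U2(2)] by auto
  moreover have "fdim W + fdim U0 = fdim U1 + fdim U2" using fdim_ssum_Int[OF U1 U2] .
  moreover have "fdim W + fdim (U0 \<inter> D) = fdim U0 + fdim D"
    using fdim_ssum_Int[OF U0 D(1,2)] ssum_U0_D by simp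
  ultimately have "fdim (U0 \<inter> D) = 0" by linarith
  then show ?thesis using fdim_eq_0_iff[OF fvs.subspace_inter[OF U0(1) D(1)]] U0(2) by simp
qed

lemma ssum_U0_phi_Int:
  assumes V: "fsubspace V" "V \<subseteq> W" and U: "fsubspace U" "ssum U0 C = U"
    and C: "fsubspace C" "C \<subseteq> D"
  shows "ssum U0 (phi V \<inter> C) = ssum V U0 \<inter> U"
proof -
  have "ssum U0 C \<inter> ssum V U0 = ssum U0 (C \<inter> ssum V U0)"
    using ssum_Int_modular[OF fsubspace_ssum[OF V(1) U0(1)] ssum_upper2[OF V(1)]] .
  moreover have "C \<inter> ssum V U0 = phi V \<inter> C" unfolding phi_def using C(2) by blast
  ultimately show ?thesis using U(2) by (simp add: Int_commute)
qed

lemma fdim_Int_eq_phi: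
  assumes V: "fsubspace V" "V \<subseteq> W" and U: "fsubspace U" "ssum U0 C = U"
    and C: "fsubspace C" "C \<subseteq> D"
  shows "fdim (V \<inter> U) = fdim (V \<inter> U0) + fdim (phi V \<inter> C)"
proof -
  have U0U: "U0 \<subseteq> U" using U(2) ssum_upper1[OF C(1)] by blast
  have finV: "finite V" using V(2) W(2) by (rule finite_subset)
  have finC: "finite C" using C(2) D(2) by (rule finite_subset)
  have PC: "fsubspace (phi V \<inter> C)" "finite (phi V \<inter> C)"
    unfolding phi_def using C(1) D(1) U0(1) V(1) finC
    by (auto intro!: fvs.subspace_inter fsubspace_ssum)
  have "ssum U0 (V \<inter> U) = ssum V U0 \<inter> U"
    using ssum_Int_modular[OF U(1) U0U, of V] by (simp add: ssum_commute)
  also have "\<dots> = ssum U0 (phi V \<inter> C)" using ssum_U0_phi_Int[OF V U C] ..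
  moreover have "U0 \<inter> (phi V \<inter> C) = {0}"
    using U0_Int_D C(2) fvs.subspace_0[OF PC(1)] fvs.subspace_0[OF U0(1)] by blast
  ultimately have "fdim (ssum U0 (V \<inter> U)) = fdim U0 + fdim (phi V \<inter> C)"
    using fdim_ssum_direct[OF U0 PC] by simp
  moreover have "U0 \<inter> (V \<inter> U) = V \<inter> U0" using U0U by blast
  then have "fdim (ssum U0 (V \<inter> U)) + fdim (V \<inter> U0) = fdim U0 + fdim (V \<inter> U)"
    using fdim_ssum_Int[OF U0 fvs.subspace_inter[OF V(1) U(1)]] finV by simp
  ultimately show ?thesis by linarith
qed

lemma phi_eq:
  assumes Y: "fsubspace Y" "Y \<subseteq> D" and "ssum V U0 = ssum U0 Y"
  shows "phi V = Y"
proof -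
  have "phi V = ssum U0 Y \<inter> D" using assms(3) unfolding phi_def by simp
  then show ?thesis using ssum_complement_Int[OF D(1) Y U0_Int_D] by simp
qed


lemma phi_mem_subspaces_of_sum:
  assumes "V \<in> profile_subspaces W U1 U2 (v0 + d) v0 v1 v2"
  shows "phi V \<in> subspaces_of_sum C1 C2 d (v1 - v0) (v2 - v0)"
proof -
  have V: "fsubspace V" "V \<subseteq> W" "fdim V = v0 + d" "fdim (V \<inter> U0) = v0"
    "fdim (V \<inter> U1) = v1" "fdim (V \<inter> U2) = v2"
    using assms unfolding profile_subspaces_def by auto
  have C_D: "C1 \<subseteq> D" "C2 \<subseteq> D" using ssum_upper1[OF C2(1)] ssum_upper2[OF C1(1)] .
  have phi: "fsubspace (phi V)" "phi V \<subseteq> D"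
    unfolding phi_def using V(1) U0(1) D(1) by (auto intro: fvs.subspace_inter fsubspace_ssum)
  have "fdim (V \<inter> W) = v0 + fdim (phi V \<inter> D)"
    using fdim_Int_eq_phi[OF V(1,2) W(1) ssum_U0_D D(1) order_refl] V(4) by simp
  moreover have "fdim (V \<inter> U1) = v0 + fdim (phi V \<inter> C1)"
    using fdim_Int_eq_phi[OF V(1,2) U1(1) C1(3) C1(1) C_D(1)] V(4) by simp
  moreover have "fdim (V \<inter> U2) = v0 + fdim (phi V \<inter> C2)"
    using fdim_Int_eq_phi[OF V(1,2) U2(1) C2(3) C2(1) C_D(2)] V(4) by simp
  ultimately show ?thesis
    unfolding subspaces_of_sum_def using V phi by (simp add: Int_absorb1 Int_absorb2)
qed

lemma phi_fibre:
  assumes Y: "Y \<in> subspaces_of_sum C1 C2 d (v1 - v0) (v2 - v0)" and v: "v0 \<le> v1" "v0 \<le> v2"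
  shows "{V \<in> profile_subspaces W U1 U2 (v0 + d) v0 v1 v2. phi V = Y} =
    {V. fsubspace V \<and> V \<subseteq> ssum U0 Y \<and> fdim V = v0 + d \<and> fdim (V \<inter> U0) = v0}"
proof (intro set_eqI iffI)
  fix V assume "V \<in> {V \<in> profile_subspaces W U1 U2 (v0 + d) v0 v1 v2. phi V = Y}"
  then have V: "fsubspace V" "V \<subseteq> W" "fdim V = v0 + d" "fdim (V \<inter> U0) = v0" "phi V = Y"
    unfolding profile_subspaces_def by auto
  have "phi V \<subseteq> D" unfolding phi_def by blast
  moreover have "ssum V U0 \<subseteq> W"
    using V(2) ssum_upper1[OF U2(1), of U1] by (intro ssum_least[OF W(1)]) auto
  ultimately have "ssum U0 Y = ssum V U0"
    using ssum_U0_phi_Int[OF V(1,2) W(1) ssum_U0_D D(1) order_refl] V(5)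
    by (simp add: Int_absorb1 Int_absorb2)
  then show "V \<in> {V. fsubspace V \<and> V \<subseteq> ssum U0 Y \<and> fdim V = v0 + d \<and> fdim (V \<inter> U0) = v0}"
    using V ssum_upper1[OF U0(1), of V] by simp
next
  fix V assume "V \<in> {V. fsubspace V \<and> V \<subseteq> ssum U0 Y \<and> fdim V = v0 + d \<and> fdim (V \<inter> U0) = v0}"
  then have V: "fsubspace V" "V \<subseteq> ssum U0 Y" "fdim V = v0 + d" "fdim (V \<inter> U0) = v0" by auto
  have Y': "fsubspace Y" "Y \<subseteq> D" "fdim Y = d" "fdim (Y \<inter> C1) = v1 - v0" "fdim (Y \<inter> C2) = v2 - v0"
    using Y unfolding subspaces_of_sum_def by (auto simp: Int_absorb2)
  have finY: "finite Y" using Y'(2) D(2) by (rule finite_subset)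
  have YW: "ssum U0 Y \<subseteq> W"
    using Y'(2) D(3) ssum_U0_D ssum_mono[of U0 U0 Y D] by auto
  have VW: "V \<subseteq> W" using V(2) YW by blast
  have finV: "finite V" using VW W(2) by (rule finite_subset)
  have "U0 \<inter> Y = {0}" using U0_Int_D Y'(2) fvs.subspace_0[OF U0(1)] fvs.subspace_0[OF Y'(1)] by blast
  then have "fdim (ssum U0 Y) = fdim U0 + d" using fdim_ssum_direct[OF U0 Y'(1) finY] Y'(3) by simp
  moreover have "fdim (ssum V U0) + v0 = v0 + d + fdim U0"
    using fdim_ssum_Int[OF V(1) finV U0] V(3,4) by simp
  moreover have "ssum V U0 \<subseteq> ssum U0 Y"
    using V(2) ssum_upper1[OF Y'(1), of U0] by (intro ssum_least fsubspace_ssum U0(1) Y'(1)) auto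
  ultimately have "ssum V U0 = ssum U0 Y"
    using finite_subset[OF YW W(2)] U0(1) Y'(1) V(1)
    by (intro fsubspace_eq_if_fdim_le fsubspace_ssum) auto
  then have phi: "phi V = Y" using phi_eq[OF Y'(1,2)] by simp
  have C_D: "C1 \<subseteq> D" "C2 \<subseteq> D" using ssum_upper1[OF C2(1)] ssum_upper2[OF C1(1)] .
  have "fdim (V \<inter> U1) = v1"
    using fdim_Int_eq_phi[OF V(1) VW U1(1) C1(3) C1(1) C_D(1)] V(4) phi Y'(4) v(1) by simp
  moreover have "fdim (V \<inter> U2) = v2"
    using fdim_Int_eq_phi[OF V(1) VW U2(1) C2(3) C2(1) C_D(2)] V(4) phi Y'(5) v(2) by simp
  ultimately show "V \<in> {V \<in> profile_subspaces W U1 U2 (v0 + d) v0 v1 v2. phi V = Y}"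
    unfolding profile_subspaces_def using V VW phi by simp
qed

lemma card_profile_subspaces_eq_subspaces_of_sum:
  assumes v: "v0 \<le> fdim U0" "v0 \<le> v1" "v0 \<le> v2"
  shows "real (card (profile_subspaces W U1 U2 (v0 + d) v0 v1 v2)) =
    gbinom (real CARD('a)) (int (fdim U0)) (int v0) * real CARD('a) ^ ((fdim U0 - v0) * d)
      * real (card (subspaces_of_sum C1 C2 d (v1 - v0) (v2 - v0)))"
proof -
  let ?S = "profile_subspaces W U1 U2 (v0 + d) v0 v1 v2"
  let ?T = "subspaces_of_sum C1 C2 d (v1 - v0) (v2 - v0)"
  have fibre_card: "real (card {V \<in> ?S. phi V = Y}) =
      gbinom (real CARD('a)) (int (fdim U0)) (int v0) * real CARD('a) ^ ((fdim U0 - v0) * d)"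
    if "Y \<in> ?T" for Y
  proof -
    have Y: "fsubspace Y" "Y \<subseteq> D" "fdim Y = d"
      using that unfolding subspaces_of_sum_def by (auto simp: Int_absorb2)
    have finY: "finite Y" using Y(2) D(2) by (rule finite_subset)
    have "U0 \<inter> Y = {0}" using U0_Int_D Y(2) fvs.subspace_0[OF U0(1)] fvs.subspace_0[OF Y(1)] by blast
    then have "fdim (ssum U0 Y) = fdim U0 + d" using fdim_ssum_direct[OF U0 Y(1) finY] Y(3) by simp
    then show ?thesis
      unfolding phi_fibre[OF that v(2,3)]
      using card_subspaces_fdim_Int[OF U0(1) fsubspace_ssum[OF U0(1) Y(1)] finite_ssum[OF U0(2) finY]
          ssum_upper1[OF Y(1)] v(1)] by simp
  qed
  have "?S = (\<Union>Y\<in>?T. {V \<in> ?S. phi V = Y})"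
    using phi_mem_subspaces_of_sum[of _ v0 d v1 v2] by auto
  then have "card ?S = card (\<Union>Y\<in>?T. {V \<in> ?S. phi V = Y})" by (rule arg_cong)
  also have "\<dots> = (\<Sum>Y\<in>?T. card {V \<in> ?S. phi V = Y})"
  proof (rule card_UN_disjoint)
    have "finite ?S" unfolding profile_subspaces_def
      by (rule finite_subset[of _ "Pow W"]) (use W(2) in auto)
    then show "\<forall>Y\<in>?T. finite {V \<in> ?S. phi V = Y}" by simp
  qed (use finite_subspaces_of_sum[OF D(2)] in auto)
  finally show ?thesis using fibre_card by simp
qed

end

lemma card_profile_subspaces_ssum:
  fixes U1 U2 :: "'a::{field,finite} vec set"
  assumes U1: "fsubspace U1" "finite U1" and U2: "fsubspace U2" "finite U2"
    and v: "v0 \<le> fdim (U1 \<inter> U2)" "v0 \<le> v1" "v0 \<le> v2"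
  shows "real (card (profile_subspaces (ssum U1 U2) U1 U2 (t + v1 + v2 - v0) v0 v1 v2)) =
    gbinom (real CARD('a)) (int (fdim (U1 \<inter> U2))) (int v0)
    * real CARD('a) ^ ((fdim (U1 \<inter> U2) - v0) * (t + v1 + v2 - 2 * v0))
    * real (Nt TYPE('a) t (fdim U1 - fdim (U1 \<inter> U2)) (fdim U2 - fdim (U1 \<inter> U2)) (v1 - v0) (v2 - v0))"
proof -
  have U0: "fsubspace (U1 \<inter> U2)" "finite (U1 \<inter> U2)"
    using U1 U2 by (auto intro: fvs.subspace_inter)
  obtain C1 where compl1: "fsubspace C1" "C1 \<subseteq> U1" "(U1 \<inter> U2) \<inter> C1 = {0}" "ssum (U1 \<inter> U2) C1 = U1"
    using fsubspace_complement_exists[OF U0(1) U1 Int_lower1] .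
  obtain C2 where compl2: "fsubspace C2" "C2 \<subseteq> U2" "(U1 \<inter> U2) \<inter> C2 = {0}" "ssum (U1 \<inter> U2) C2 = U2"
    using fsubspace_complement_exists[OF U0(1) U2 Int_lower2] .
  interpret complemented_pair U1 U2 C1 C2
    using U1 U2 compl1 compl2 by unfold_locales simp_all
  have finC: "finite C1" "finite C2"
    using finite_subset[OF compl1(2) U1(2)] finite_subset[OF compl2(2) U2(2)] .
  have "fdim U1 = fdim U0 + fdim C1" "fdim U2 = fdim U0 + fdim C2"
    using fdim_ssum_direct[OF U0 compl1(1) finC(1) compl1(3)] fdim_ssum_direct[OF U0 compl2(1) finC(2) compl2(3)]
      compl1(4) compl2(4) by simp_all
  moreover have "C1 \<inter> C2 = {0}"
  proof -
    have "C1 \<inter> C2 \<subseteq> U0 \<inter> C1" using compl1(2) compl2(2) by auto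
    then show ?thesis using compl1(3) fvs.subspace_0[OF compl1(1)] fvs.subspace_0[OF compl2(1)] by auto
  qed
  ultimately have Nt: "Nt TYPE('a) t (fdim U1 - fdim U0) (fdim U2 - fdim U0) (v1 - v0) (v2 - v0) =
      card (subspaces_of_sum C1 C2 (t + (v1 - v0) + (v2 - v0)) (v1 - v0) (v2 - v0))"
    using Nt_eq_card_subspaces_of_sum[OF compl1(1) finC(1) compl2(1) finC(2)] by simp
  have "t + v1 + v2 - v0 = v0 + (t + (v1 - v0) + (v2 - v0))"
    and "t + v1 + v2 - 2 * v0 = t + (v1 - v0) + (v2 - v0)" using v by simp_all
  then show ?thesis unfolding Nt using card_profile_subspaces_eq_subspaces_of_sum[OF v] by presburger
qed

lemma profile_subspaces_dim_bounds:
  fixes U1 U2 X :: "'a::{field,finite} vec set"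
  assumes U1: "fsubspace U1" "finite U1" and U2: "fsubspace U2" "finite U2"
    and X: "X \<in> profile_subspaces (ssum U1 U2) U1 U2 n v0 v1 v2"
  shows "v1 + v2 \<le> n + v0" "n + fdim U1 \<le> fdim (ssum U1 U2) + v1"
    "n + fdim U2 \<le> fdim (ssum U1 U2) + v2"
proof -
  have X': "fsubspace X" "X \<subseteq> ssum U1 U2" "fdim X = n" "fdim (X \<inter> (U1 \<inter> U2)) = v0"
    "fdim (X \<inter> U1) = v1" "fdim (X \<inter> U2) = v2"
    using X unfolding profile_subspaces_def by auto
  have W: "fsubspace (ssum U1 U2)" "finite (ssum U1 U2)"
    using U1 U2 by (simp_all add: fsubspace_ssum finite_ssum)
  have finX: "finite X" using X'(2) W(2) by (rule finite_subset)
  have XU: "fsubspace (X \<inter> U1)" "fsubspace (X \<inter> U2)"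
    using X'(1) U1(1) U2(1) by (simp_all add: fvs.subspace_inter)
  have "ssum (X \<inter> U1) (X \<inter> U2) \<subseteq> X" using X'(1) by (intro ssum_least) auto
  moreover have "X \<inter> U1 \<inter> (X \<inter> U2) = X \<inter> (U1 \<inter> U2)" by blast
  ultimately show "v1 + v2 \<le> n + v0"
    using fdim_add_le_fdim_Int[OF XU X'(1) finX] X' by simp
  have "ssum X U1 \<subseteq> ssum U1 U2" "ssum X U2 \<subseteq> ssum U1 U2"
    using ssum_least[OF W(1) X'(2) ssum_upper1[OF U2(1), of U1]]
      ssum_least[OF W(1) X'(2) ssum_upper2[OF U1(1), of U2]] .
  then show "n + fdim U1 \<le> fdim (ssum U1 U2) + v1" "n + fdim U2 \<le> fdim (ssum U1 U2) + v2"
    using fdim_add_le_fdim_Int[OF X'(1) U1(1) W] fdim_add_le_fdim_Int[OF X'(1) U2(1) W] X'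
    by simp_all
qed

lemma profile_subspaces_eq_UN_subspaces_meeting:
  fixes U1 U2 E :: "'a::{field,finite} vec set"
  assumes E: "fsubspace E" "finite E" and U1: "fsubspace U1" "U1 \<subseteq> E"
    and U2: "fsubspace U2" "U2 \<subseteq> E" and v: "v0 \<le> fdim (U1 \<inter> U2)" "v1 \<le> fdim U1" "v2 \<le> fdim U2"
  shows "profile_subspaces E U1 U2 l v0 v1 v2 =
    (\<Union>s\<in>{0..min (fdim U1 - v1) (fdim U2 - v2)}.
      \<Union>X\<in>profile_subspaces (ssum U1 U2) U1 U2 (s + v1 + v2 - v0) v0 v1 v2.
        subspaces_meeting E (ssum U1 U2) X l)"
    (is "_ = (\<Union>s\<in>?I. \<Union>X\<in>?Ss s. _)")
proof (intro set_eqI iffI)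
  let ?W = "ssum U1 U2"
  have fin: "finite U1" "finite U2"
    using finite_subset[OF U1(2) E(2)] finite_subset[OF U2(2) E(2)] .
  have UW: "U1 \<subseteq> ?W" "U2 \<subseteq> ?W" using ssum_upper1[OF U2(1)] ssum_upper2[OF U1(1)] .
  {
    fix V assume "V \<in> profile_subspaces E U1 U2 l v0 v1 v2"
    then have V: "fsubspace V" "V \<subseteq> E" "fdim V = l" "fdim (V \<inter> (U1 \<inter> U2)) = v0"
      "fdim (V \<inter> U1) = v1" "fdim (V \<inter> U2) = v2"
      unfolding profile_subspaces_def by auto
    let ?X = "V \<inter> ?W"
    have "?W \<inter> (U1 \<inter> U2) = U1 \<inter> U2" "?W \<inter> U1 = U1" "?W \<inter> U2 = U2" using UW by auto
    then have X: "?X \<in> profile_subspaces ?W U1 U2 (fdim ?X) v0 v1 v2"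
      unfolding profile_subspaces_def using V U1(1) U2(1)
      by (simp add: fvs.subspace_inter fsubspace_ssum Int_assoc)
    define s where "s = fdim ?X + v0 - v1 - v2"
    have "s \<in> ?I" "fdim ?X = s + v1 + v2 - v0"
      using profile_subspaces_dim_bounds[OF U1(1) fin(1) U2(1) fin(2) X]
        fdim_ssum_Int[OF U1(1) fin(1) U2(1) fin(2)] v
      unfolding s_def by auto
    moreover have "V \<in> subspaces_meeting E ?W ?X l"
      unfolding subspaces_meeting_def using V by simp
    ultimately show "V \<in> (\<Union>s\<in>?I. \<Union>X\<in>?Ss s. subspaces_meeting E ?W X l)"
      using X by auto
  next
    fix V assume "V \<in> (\<Union>s\<in>?I. \<Union>X\<in>?Ss s. subspaces_meeting E ?W X l)"
    then obtain s X where X: "X \<in> ?Ss s" and V: "V \<in> subspaces_meeting E ?W X l" by blast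
    have "V \<inter> U = X \<inter> U" if "U \<subseteq> ?W" for U
      using that V unfolding subspaces_meeting_def by blast
    then have "V \<inter> (U1 \<inter> U2) = X \<inter> (U1 \<inter> U2)" "V \<inter> U1 = X \<inter> U1" "V \<inter> U2 = X \<inter> U2"
      using UW by auto
    with X V show "V \<in> profile_subspaces E U1 U2 l v0 v1 v2"
      unfolding profile_subspaces_def subspaces_meeting_def by simp
  }
qed

lemma card_profile_subspaces:
  fixes U1 U2 E :: "'a::{field,finite} vec set"
  assumes E: "fsubspace E" "finite E" and U1: "fsubspace U1" "U1 \<subseteq> E"
    and U2: "fsubspace U2" "U2 \<subseteq> E"
    and v: "v0 \<le> fdim (U1 \<inter> U2)" "v0 \<le> v1" "v1 \<le> fdim U1" "v0 \<le> v2" "v2 \<le> fdim U2"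
  shows "real (card (profile_subspaces E U1 U2 l v0 v1 v2)) =
    (\<Sum>s = 0..min (fdim U1 - v1) (fdim U2 - v2).
      real CARD('a) powi
        ((int (fdim U1 - v1) + int (fdim U2 - v2) - int (fdim (U1 \<inter> U2) - v0) - int s)
          * (int l - int s - int v1 - int v2 + int v0))
      * gbinom (real CARD('a)) (int (fdim E) - int (fdim U1) - int (fdim U2) + int (fdim (U1 \<inter> U2)))
          (int l - int s - int v1 - int v2 + int v0)
      * real (card (profile_subspaces (ssum U1 U2) U1 U2 (s + v1 + v2 - v0) v0 v1 v2)))"
  (is "_ = (\<Sum>s\<in>?I. ?f s * real (card (?Ss s)))")
proof -
  let ?W = "ssum U1 U2"
  have fin: "finite U1" "finite U2"
    using finite_subset[OF U1(2) E(2)] finite_subset[OF U2(2) E(2)] .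
  have W: "fsubspace ?W" "?W \<subseteq> E" "finite ?W"
    using U1 U2 fin by (simp_all add: fsubspace_ssum finite_ssum ssum_least[OF E(1)])
  have fin_Ss: "finite (?Ss s)" for s
    unfolding profile_subspaces_def by (rule finite_subset[of _ "Pow ?W"]) (use W(3) in auto)
  have fdim_Ss: "fsubspace X" "X \<subseteq> ?W" "fdim X = s + v1 + v2 - v0" if "X \<in> ?Ss s" for X s
    using that unfolding profile_subspaces_def by simp_all
  have "card (\<Union>X\<in>?Ss s. subspaces_meeting E ?W X l) = (\<Sum>X\<in>?Ss s. card (subspaces_meeting E ?W X l))"
    for s using fin_Ss finite_subspaces_meeting[OF E(2)]
    by (intro card_UN_disjoint) (auto simp: subspaces_meeting_def)
  moreover have "card (\<Union>s\<in>?I. \<Union>X\<in>?Ss s. subspaces_meeting E ?W X l)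
      = (\<Sum>s\<in>?I. card (\<Union>X\<in>?Ss s. subspaces_meeting E ?W X l))"
  proof (rule card_UN_disjoint)
    show "\<forall>s\<in>?I. \<forall>s'\<in>?I. s \<noteq> s' \<longrightarrow>
        (\<Union>X\<in>?Ss s. subspaces_meeting E ?W X l) \<inter> (\<Union>X\<in>?Ss s'. subspaces_meeting E ?W X l) = {}"
    proof (intro ballI impI equals0I)
      fix s s' V assume "s \<noteq> s'"
        and "V \<in> (\<Union>X\<in>?Ss s. subspaces_meeting E ?W X l) \<inter> (\<Union>X\<in>?Ss s'. subspaces_meeting E ?W X l)"
      then obtain X X' where "X \<in> ?Ss s" "X' \<in> ?Ss s'" "V \<inter> ?W = X" "V \<inter> ?W = X'"
        unfolding subspaces_meeting_def by blast
      then show False using fdim_Ss(3)[of X s] fdim_Ss(3)[of X' s'] v(2) \<open>s \<noteq> s'\<close> by auto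
    qed
  qed (use fin_Ss finite_subspaces_meeting[OF E(2)] in auto)
  ultimately have "real (card (profile_subspaces E U1 U2 l v0 v1 v2)) =
      (\<Sum>s\<in>?I. \<Sum>X\<in>?Ss s. real (card (subspaces_meeting E ?W X l)))"
    unfolding profile_subspaces_eq_UN_subspaces_meeting[OF E U1 U2 v(1,3,5)] by simp
  also have "\<dots> = (\<Sum>s\<in>?I. \<Sum>X\<in>?Ss s. ?f s)"
  proof (intro sum.cong refl)
    fix s X assume X: "X \<in> ?Ss s"
    have "fdim ?W + fdim (U1 \<inter> U2) = fdim U1 + fdim U2"
      using fdim_ssum_Int[OF U1(1) fin(1) U2(1) fin(2)] .
    then have exps: "int (fdim U1 - v1) + int (fdim U2 - v2) - int (fdim (U1 \<inter> U2) - v0) - int s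
          = int (fdim ?W) - int (fdim X)"
        "int l - int s - int v1 - int v2 + int v0 = int l - int (fdim X)"
        "int (fdim E) - int (fdim U1) - int (fdim U2) + int (fdim (U1 \<inter> U2)) = int (fdim E) - int (fdim ?W)"
      using fdim_Ss(3)[OF X] v by linarith+
    show "real (card (subspaces_meeting E ?W X l)) = ?f s"
      unfolding exps by (rule card_subspaces_meeting_int[OF fdim_Ss(1)[OF X] W(1) E fdim_Ss(2)[OF X] W(2)])
  qed
  finally show ?thesis by (simp add: mult.commute)
qed

theorem lemma3p4:
  fixes U1 U2 :: "(nat \<Rightarrow> 'a::{field,finite}) set"
    and k u0 u1 u2 t v0 v1 v2 l :: nat
  assumes "fsubspace U1" "U1 \<subseteq> Fk k" "fsubspace U2" "U2 \<subseteq> Fk k"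
    and "fdim U1 = u1" "fdim U2 = u2" "fdim (U1 \<inter> U2) = u0"
    and "u0 < min u1 u2"
    and "v0 \<le> u0" "v0 \<le> v1" "v1 \<le> u1" "v0 \<le> v2" "v2 \<le> u2"
  shows
   "real (card {V. fsubspace V \<and> V \<subseteq> ssum U1 U2 \<and> fdim V = t + v1 + v2 - v0
          \<and> fdim (V \<inter> (U1 \<inter> U2)) = v0 \<and> fdim (V \<inter> U1) = v1 \<and> fdim (V \<inter> U2) = v2})
      = gbinom (real (CARD('a))) (int u0) (int v0)
        * real (CARD('a)) ^ ((u0 - v0) * (t + v1 + v2 - 2 * v0))
        * real (Nt TYPE('a) t (u1 - u0) (u2 - u0) (v1 - v0) (v2 - v0))
    \<and>
    real (card {V. fsubspace V \<and> V \<subseteq> Fk k \<and> fdim V = l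
          \<and> fdim (V \<inter> (U1 \<inter> U2)) = v0 \<and> fdim (V \<inter> U1) = v1 \<and> fdim (V \<inter> U2) = v2})
      = (\<Sum>s = 0..min (u1 - v1) (u2 - v2).
           real (CARD('a)) powi
             ((int (u1 - v1) + int (u2 - v2) - int (u0 - v0) - int s)
              * (int l - int s - int v1 - int v2 + int v0))
         * gbinom (real (CARD('a))) (int k - int u1 - int u2 + int u0)
                  (int l - int s - int v1 - int v2 + int v0)
         * real (card {V. fsubspace V \<and> V \<subseteq> ssum U1 U2 \<and> fdim V = s + v1 + v2 - v0
              \<and> fdim (V \<inter> (U1 \<inter> U2)) = v0 \<and> fdim (V \<inter> U1) = v1 \<and> fdim (V \<inter> U2) = v2}))"
proof -
  have fin: "finite U1" "finite U2"
    using finite_subset[OF assms(2) finite_Fk] finite_subset[OF assms(4) finite_Fk] .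
  have "real (card (profile_subspaces (ssum U1 U2) U1 U2 (t + v1 + v2 - v0) v0 v1 v2))
      = gbinom (real (CARD('a))) (int u0) (int v0)
        * real (CARD('a)) ^ ((u0 - v0) * (t + v1 + v2 - 2 * v0))
        * real (Nt TYPE('a) t (u1 - u0) (u2 - u0) (v1 - v0) (v2 - v0))"
    using card_profile_subspaces_ssum[OF assms(1) fin(1) assms(3) fin(2)] assms(5-7,9,10,12)
    by simp
  moreover have "real (card (profile_subspaces (Fk k) U1 U2 l v0 v1 v2))
      = (\<Sum>s = 0..min (u1 - v1) (u2 - v2).
           real (CARD('a)) powi
             ((int (u1 - v1) + int (u2 - v2) - int (u0 - v0) - int s)
              * (int l - int s - int v1 - int v2 + int v0))
         * gbinom (real (CARD('a))) (int k - int u1 - int u2 + int u0)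
                  (int l - int s - int v1 - int v2 + int v0)
         * real (card (profile_subspaces (ssum U1 U2) U1 U2 (s + v1 + v2 - v0) v0 v1 v2)))"
    using card_profile_subspaces[OF fsubspace_Fk finite_Fk assms(1-4)] assms(5-7,9-13)
      fdim_Fk[where 'a='a] by simp
  ultimately show ?thesis unfolding profile_subspaces_def by blast
qed

end
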